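(* Let $\omega:\Gamma^2\to\Gamma$ be a group morphism and define $\widetilde\omega:\Gamma^2\to\Gamma$ by $\widetilde\omega(g,h):=\omega(h,g)$. Then $G(\widetilde\omega)\cong G(\omega)$.
   Context: $\{0,1\}^*$ denotes the finite words over $\{0,1\}$; $\mathfrak C=\{0,1\}^{\mathbb N}$. A finite complete prefix code is a finite set $\{t_1,\dots,t_n\}\subset\{0,1\}^*$ such that every $x\in\mathfrak C$ has exactly one $t_i$ as prefix. Thompson's group $V$ is the group of homeomorphisms $v$ of $\mathfrak C$ for which there exist finite complete prefix codes $\{t_i\},\{s_i\}$ and a permutation $\sigma$ with $v(t_iw)=s_{\sigma(i)}w$. For a group morphism $\omega:\Gamma^2\to\Gamma$, $K(\omega)$ is the group of maps $a:\{0,1\}^*\to\Gamma$ (pointwise product) with $a(u)=\omega(a(u0),a(u1))$ for all $u$; $V$ acts on it by $\pi(v)(a)(s_{\sigma(i)}u)=a(t_iu)$ for all $i$, $u$ (determining $\pi(v)(a)\in K(\omega)$ uniquely); $G(\omega):=K(\omega)\rtimes V$ with $vav^{-1}=\pi(v)(a)$. *)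

theory Defs
  imports "HOL-Algebra.Algebra"
begin

text \<open>Finite words over {0,1} are \<open>bool list\<close> (False = 0, True = 1);
  the Cantor space is \<open>nat \<Rightarrow> bool\<close>.\<close>

type_synonym word01 = "bool list"
type_synonym cantor = "nat \<Rightarrow> bool"

definition prepend :: "word01 \<Rightarrow> cantor \<Rightarrow> cantor" where
  "prepend u x = (\<lambda>n. if n < length u then u ! n else x (n - length u))"

definition is_prefix_of :: "word01 \<Rightarrow> cantor \<Rightarrow> bool" where
  "is_prefix_of t x \<longleftrightarrow> (\<forall>i < length t. x i = t ! i)"

definition complete_prefix_code :: "nat \<Rightarrow> (nat \<Rightarrow> word01) \<Rightarrow> bool" where
  "complete_prefix_code n t \<longleftrightarrow>
     inj_on t {..<n} \<and> (\<forall>x. \<exists>!i. i < n \<and> is_prefix_of (t i) x)"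

definition V_rep :: "(cantor \<Rightarrow> cantor) \<Rightarrow> nat \<Rightarrow> (nat \<Rightarrow> word01)
     \<Rightarrow> (nat \<Rightarrow> word01) \<Rightarrow> (nat \<Rightarrow> nat) \<Rightarrow> bool" where
  "V_rep v n t s \<sigma> \<longleftrightarrow>
     complete_prefix_code n t \<and> complete_prefix_code n s \<and> \<sigma> permutes {..<n} \<and>
     (\<forall>i < n. \<forall>w. v (prepend (t i) w) = prepend (s (\<sigma> i)) w)"

text \<open>Thompson's group V (as a set of self-maps of the Cantor space; such maps are
  automatically homeomorphisms).\<close>
definition thompsonV :: "(cantor \<Rightarrow> cantor) set" where
  "thompsonV = {v. \<exists>n t s \<sigma>. V_rep v n t s \<sigma>}"

definition Kom :: "('g, 'm) monoid_scheme \<Rightarrow> ('g \<times> 'g \<Rightarrow> 'g) \<Rightarrow> (word01 \<Rightarrow> 'g) set" where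
  "Kom \<Gamma> \<omega> = {a. (\<forall>u. a u \<in> carrier \<Gamma>) \<and> (\<forall>u. a u = \<omega> (a (u @ [False]), a (u @ [True])))}"

definition pi_act :: "('g, 'm) monoid_scheme \<Rightarrow> ('g \<times> 'g \<Rightarrow> 'g) \<Rightarrow> (cantor \<Rightarrow> cantor)
     \<Rightarrow> (word01 \<Rightarrow> 'g) \<Rightarrow> (word01 \<Rightarrow> 'g)" where
  "pi_act \<Gamma> \<omega> v a = (THE b. b \<in> Kom \<Gamma> \<omega> \<and>
      (\<exists>n t s \<sigma>. V_rep v n t s \<sigma> \<and> (\<forall>i < n. \<forall>u. b (s (\<sigma> i) @ u) = a (t i @ u))))"

text \<open>G(\<omega>) = K(\<omega>) \<rtimes> V, elements written as pairs (a, v) standing for a v,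
  with v a v^-1 = \<pi>(v)(a), so (a,v)(b,w) = (a \<pi>(v)(b), v \<circ> w).\<close>
definition Gom :: "('g, 'm) monoid_scheme \<Rightarrow> ('g \<times> 'g \<Rightarrow> 'g)
     \<Rightarrow> ((word01 \<Rightarrow> 'g) \<times> (cantor \<Rightarrow> cantor)) monoid" where
  "Gom \<Gamma> \<omega> = \<lparr>carrier = Kom \<Gamma> \<omega> \<times> thompsonV,
     monoid.mult = (\<lambda>(a, v) (b, w). (\<lambda>u. a u \<otimes>\<^bsub>\<Gamma>\<^esub> pi_act \<Gamma> \<omega> v b u, v \<circ> w)),
     monoid.one = (\<lambda>u. \<one>\<^bsub>\<Gamma>\<^esub>, id)\<rparr>"

end

theory Submission
  imports Defs
begin

text \<open>Reversing every bit (\<open>map Not\<close> on words, \<open>Not \<circ> x\<close> on the Cantor space) swaps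
  the two children \<open>u0\<close>, \<open>u1\<close> of every vertex of the binary tree. Hence \<open>a \<mapsto> a \<circ> map Not\<close>
  carries \<open>K(\<omega>')\<close> onto \<open>K(\<omega>)\<close> for \<open>\<omega>'(g, h) = \<omega>(h, g)\<close>, conjugation by the bit
  reversal maps \<open>V\<close> onto itself, and the pair of these maps is an isomorphism
  \<open>G(\<omega>') \<cong> G(\<omega>)\<close>. The substance lies in checking that it intertwines the two actions
  \<open>\<pi>\<close>, which are given only by a definite description, so one must show that \<open>\<pi>(v)(a)\<close>
  exists and is unique. Uniqueness holds because an element of \<open>K(\<omega>)\<close> is determined by
  its values on long words; existence because any \<open>\<omega>\<close>-compatible labelling of the long
  words extends towards the root by applying \<open>\<omega>\<close>. Bit reversal then transports the defining
  property of \<open>\<pi>\<close> from \<open>\<omega>'\<close> to \<open>\<omega>\<close>.\<close>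

section \<open>Prefix codes and Thompson's group \<open>V\<close>\<close>

lemma prepend_append: "prepend (p @ q) x = prepend p (prepend q x)"
  by (auto simp: prepend_def nth_append)

lemma is_prefix_of_prepend: "is_prefix_of p (prepend (p @ d) x)"
  by (auto simp: is_prefix_of_def prepend_def nth_append)

lemma prepend_drop_prefix: "is_prefix_of p x \<Longrightarrow> prepend p (\<lambda>k. x (k + length p)) = x"
  by (auto simp: is_prefix_of_def prepend_def)

lemma inj_prepend: "inj (prepend p)"
proof (rule injI)
  fix x y assume "prepend p x = prepend p y"
  then have "prepend p x (k + length p) = prepend p y (k + length p)" for k
    by simp
  then show "x = y"
    by (simp add: prepend_def fun_eq_iff)
qed

lemma prepend_eq_iff: "prepend p = prepend q \<longleftrightarrow> p = q"
proof
  assume eq: "prepend p = prepend q"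
  have not_shorter: "\<not> length p < length q" if "prepend p = prepend q" for p q :: word01
  proof
    assume less: "length p < length q"
    let ?x = "\<lambda>_. \<not> q ! length p"
    have "prepend p ?x (length p) = prepend q ?x (length p)"
      using that by simp
    then show False
      using less by (simp add: prepend_def)
  qed
  have len: "length p = length q"
    using not_shorter[OF eq] not_shorter[OF eq [symmetric]] by simp
  have "p ! k = q ! k" if "k < length p" for k
    using fun_cong[OF fun_cong[OF eq, of "\<lambda>_. False"], of k] that len
    by (simp add: prepend_def)
  with len show "p = q"
    by (simp add: nth_equalityI)
qed simp

lemma is_prefix_of_prepend_imp_prefix:
  assumes "length p \<le> length w" and "is_prefix_of p (prepend w x)"
  shows "\<exists>d. w = p @ d"
proof -
  have "take (length p) w = p"
  proof (rule nth_equalityI)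
    fix i assume "i < length (take (length p) w)"
    then have "i < length p" "i < length w"
      using assms(1) by auto
    moreover have "prepend w x i = p ! i"
      using assms(2) \<open>i < length p\<close> by (simp add: is_prefix_of_def)
    ultimately show "take (length p) w ! i = p ! i"
      by (simp add: prepend_def)
  qed (use assms(1) in simp)
  then show ?thesis
    by (metis append_take_drop_id)
qed

lemma complete_prefix_code_ex:
  "complete_prefix_code n s \<Longrightarrow> \<exists>i<n. is_prefix_of (s i) x"
  unfolding complete_prefix_code_def by blast

lemma complete_prefix_code_unique:
  "complete_prefix_code n s \<Longrightarrow> i < n \<Longrightarrow> j < n \<Longrightarrow> is_prefix_of (s i) x
    \<Longrightarrow> is_prefix_of (s j) x \<Longrightarrow> i = j"
  unfolding complete_prefix_code_def by blast

lemma complete_prefix_code_permute: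
  assumes code: "complete_prefix_code n s" and perm: "\<sigma> permutes {..<n}"
  shows "complete_prefix_code n (s \<circ> \<sigma>)"
  unfolding complete_prefix_code_def
proof (intro conjI allI)
  have "inj_on s (\<sigma> ` {..<n})"
    using code permutes_image[OF perm] by (simp add: complete_prefix_code_def)
  then show "inj_on (s \<circ> \<sigma>) {..<n}"
    using permutes_inj_on[OF perm] by (simp add: comp_inj_on)
next
  fix x
  obtain k where k: "k < n" "is_prefix_of (s k) x"
    using complete_prefix_code_ex[OF code] by blast
  then obtain i where "i < n" "\<sigma> i = k"
    using permutes_image[OF perm] by (metis imageE lessThan_iff)
  moreover have "i' = i" if "i' < n" "is_prefix_of (s (\<sigma> i')) x" for i'
    using complete_prefix_code_unique[OF code _ k(1) that(2) k(2)] \<open>\<sigma> i = k\<close>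
      permutes_in_image[OF perm] permutes_inj[OF perm] that(1)
    by (metis injD lessThan_iff)
  ultimately show "\<exists>!i. i < n \<and> is_prefix_of ((s \<circ> \<sigma>) i) x"
    using k(2) by auto
qed

lemma complete_prefix_code_long_word:
  assumes code: "complete_prefix_code n s" and long: "(\<Sum>k<n. length (s k)) \<le> length w"
  shows "\<exists>i<n. \<exists>d. w = s i @ d"
proof -
  obtain i where i: "i < n" "is_prefix_of (s i) (prepend w (\<lambda>_. False))"
    using complete_prefix_code_ex[OF code] by blast
  have "length (s i) \<le> (\<Sum>k<n. length (s k))"
    using i(1) by (intro member_le_sum) auto
  then show ?thesis
    using is_prefix_of_prepend_imp_prefix[OF _ i(2)] long i(1) by auto
qed

lemma complete_prefix_code_append_unique:
  assumes "complete_prefix_code n s" "i < n" "j < n" "s i @ d = s j @ d'"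
  shows "i = j \<and> d = d'"
proof -
  have "i = j"
    using complete_prefix_code_unique[OF assms(1-3)] is_prefix_of_prepend assms(4)
    by metis
  with assms(4) show ?thesis
    by simp
qed

definition prefix_replacement ::
    "(cantor \<Rightarrow> cantor) \<Rightarrow> nat \<Rightarrow> (nat \<Rightarrow> word01) \<Rightarrow> (nat \<Rightarrow> word01) \<Rightarrow> bool" where
  "prefix_replacement v n t s \<longleftrightarrow>
     complete_prefix_code n t \<and> complete_prefix_code n s \<and>
     (\<forall>i < n. \<forall>w. v (prepend (t i) w) = prepend (s i) w)"

lemma V_rep_imp_prefix_replacement:
  "V_rep v n t s \<sigma> \<Longrightarrow> prefix_replacement v n t (s \<circ> \<sigma>)"
  unfolding V_rep_def prefix_replacement_def by (simp add: complete_prefix_code_permute)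

lemma prefix_replacement_imp_V_rep:
  "prefix_replacement v n t s \<Longrightarrow> V_rep v n t s id"
  unfolding V_rep_def prefix_replacement_def by simp

lemma thompsonV_iff_prefix_replacement:
  "v \<in> thompsonV \<longleftrightarrow> (\<exists>n t s. prefix_replacement v n t s)"
  unfolding thompsonV_def
  using V_rep_imp_prefix_replacement prefix_replacement_imp_V_rep by blast

lemma prefix_replacement_inj:
  assumes rep: "prefix_replacement v n t s"
  shows "inj v"
proof (rule injI)
  fix y z assume eq: "v y = v z"
  have t: "complete_prefix_code n t" and s: "complete_prefix_code n s"
    and act: "\<And>i w. i < n \<Longrightarrow> v (prepend (t i) w) = prepend (s i) w"
    using rep unfolding prefix_replacement_def by auto
  obtain i where i: "i < n" "is_prefix_of (t i) y"
    using complete_prefix_code_ex[OF t] by blast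
  obtain j where j: "j < n" "is_prefix_of (t j) z"
    using complete_prefix_code_ex[OF t] by blast
  define y' where "y' = (\<lambda>k. y (k + length (t i)))"
  define z' where "z' = (\<lambda>k. z (k + length (t j)))"
  have y: "y = prepend (t i) y'" and z: "z = prepend (t j) z'"
    using prepend_drop_prefix[OF i(2)] prepend_drop_prefix[OF j(2)] y'_def z'_def by simp_all
  have vy: "v y = prepend (s i) y'" and vz: "v y = prepend (s j) z'"
    using y z act i(1) j(1) eq by simp_all
  have "i = j"
    using complete_prefix_code_unique[OF s i(1) j(1)] is_prefix_of_prepend[of _ "[]"] vy vz
    by (metis append_Nil2)
  moreover have "y' = z'"
    using vy vz \<open>i = j\<close> inj_prepend by (metis injD)
  ultimately show "y = z"
    using y z by simp
qed

section \<open>The groups \<open>K(\<omega>)\<close> and the action of \<open>V\<close>\<close>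

lemma Kom_carrier: "c \<in> Kom \<Gamma> \<omega> \<Longrightarrow> c u \<in> carrier \<Gamma>"
  unfolding Kom_def by blast

lemma Kom_rec: "c \<in> Kom \<Gamma> \<omega> \<Longrightarrow> c u = \<omega> (c (u @ [False]), c (u @ [True]))"
  unfolding Kom_def by blast

lemma Kom_shift:
  assumes "c \<in> Kom \<Gamma> \<omega>"
  shows "(\<lambda>u. c (p @ u)) \<in> Kom \<Gamma> \<omega>"
proof -
  have "c (p @ u) = \<omega> (c (p @ u @ [False]), c (p @ u @ [True]))" for u
    using Kom_rec[OF assms, of "p @ u"] by simp
  then show ?thesis
    using Kom_carrier[OF assms] unfolding Kom_def by blast
qed

lemma Kom_eqI:
  assumes c: "c \<in> Kom \<Gamma> \<omega>" and c': "c' \<in> Kom \<Gamma> \<omega>"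
    and long: "\<And>w. N \<le> length w \<Longrightarrow> c w = c' w"
  shows "c = c'"
proof
  have "c u = c' u" if "N \<le> length u + k" for k u
    using that
  proof (induction k arbitrary: u)
    case 0
    then show ?case using long by simp
  next
    case (Suc k)
    then have "c (u @ [b]) = c' (u @ [b])" for b
      by simp
    then show ?case
      using Kom_rec[OF c, of u] Kom_rec[OF c', of u] by simp
  qed
  then show "c u = c' u" for u
    by (metis le_add2)
qed

primrec fill_up :: "('g \<times> 'g \<Rightarrow> 'g) \<Rightarrow> (word01 \<Rightarrow> 'g) \<Rightarrow> nat \<Rightarrow> word01 \<Rightarrow> 'g" where
  "fill_up \<omega> f 0 w = f w"
| "fill_up \<omega> f (Suc k) w = \<omega> (fill_up \<omega> f k (w @ [False]), fill_up \<omega> f k (w @ [True]))"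

lemma Kom_extend:
  assumes closed: "\<omega> \<in> carrier \<Gamma> \<times> carrier \<Gamma> \<rightarrow> carrier \<Gamma>"
    and f: "\<And>w. f w \<in> carrier \<Gamma>"
    and rec: "\<And>w. N \<le> length w \<Longrightarrow> f w = \<omega> (f (w @ [False]), f (w @ [True]))"
  shows "\<exists>c \<in> Kom \<Gamma> \<omega>. \<forall>w. N \<le> length w \<longrightarrow> c w = f w"
proof
  define c where "c w = fill_up \<omega> f (N - length w) w" for w
  have "fill_up \<omega> f k w \<in> carrier \<Gamma>" for k w
  proof (induction k arbitrary: w)
    case (Suc k)
    then show ?case
      using closed by (simp add: Pi_iff)
  qed (simp add: f)
  then have "c u \<in> carrier \<Gamma>" for u
    by (simp add: c_def)
  moreover have "c u = \<omega> (c (u @ [False]), c (u @ [True]))" for u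
  proof (cases "N \<le> length u")
    case True
    then show ?thesis
      using rec[OF True] by (simp add: c_def)
  next
    case False
    then have "N - length u = Suc (N - Suc (length u))"
      by simp
    then show ?thesis
      unfolding c_def by simp
  qed
  ultimately show "c \<in> Kom \<Gamma> \<omega>"
    unfolding Kom_def by blast
  show "\<forall>w. N \<le> length w \<longrightarrow> c w = f w"
    by (simp add: c_def)
qed

definition is_pi_act :: "('g, 'm) monoid_scheme \<Rightarrow> ('g \<times> 'g \<Rightarrow> 'g) \<Rightarrow> (cantor \<Rightarrow> cantor)
     \<Rightarrow> (word01 \<Rightarrow> 'g) \<Rightarrow> (word01 \<Rightarrow> 'g) \<Rightarrow> bool" where
  "is_pi_act \<Gamma> \<omega> v a b \<longleftrightarrow> b \<in> Kom \<Gamma> \<omega> \<and>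
     (\<exists>n t s. prefix_replacement v n t s \<and> (\<forall>i < n. \<forall>u. b (s i @ u) = a (t i @ u)))"

lemma pi_act_eq_The: "pi_act \<Gamma> \<omega> v a = (THE b. is_pi_act \<Gamma> \<omega> v a b)"
proof -
  have "(\<exists>n t s. prefix_replacement v n t s \<and> (\<forall>i < n. \<forall>u. b (s i @ u) = a (t i @ u))) \<longleftrightarrow>
      (\<exists>n t s \<sigma>. V_rep v n t s \<sigma> \<and> (\<forall>i < n. \<forall>u. b (s (\<sigma> i) @ u) = a (t i @ u)))"
    (is "?rep \<longleftrightarrow> ?V_rep") for b
  proof
    assume ?rep
    then obtain n t s where "prefix_replacement v n t s" "\<forall>i < n. \<forall>u. b (s i @ u) = a (t i @ u)"
      by blast
    then show ?V_rep
      using prefix_replacement_imp_V_rep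
      by (intro exI[of _ n] exI[of _ t] exI[of _ s] exI[of _ id]) simp
  next
    assume ?V_rep
    then obtain n t s \<sigma> where "V_rep v n t s \<sigma>" "\<forall>i < n. \<forall>u. b (s (\<sigma> i) @ u) = a (t i @ u)"
      by blast
    then show ?rep
      using V_rep_imp_prefix_replacement
      by (intro exI[of _ n] exI[of _ t] exI[of _ "s \<circ> \<sigma>"]) simp
  qed
  then show ?thesis
    unfolding pi_act_def is_pi_act_def by simp
qed

lemma prefix_replacement_relabel_unique:
  assumes rep: "prefix_replacement v n t s" and rep': "prefix_replacement v n' t' s'"
    and "i < n" "j < n'" "s i @ d = s' j @ d'"
  shows "t i @ d = t' j @ d'"
proof -
  have "v (prepend (t i @ d) x) = v (prepend (t' j @ d') x)" for x
    using rep rep' assms(3-5) unfolding prefix_replacement_def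
    by (metis prepend_append)
  then have "prepend (t i @ d) x = prepend (t' j @ d') x" for x
    using prefix_replacement_inj[OF rep] by (meson injD)
  then have "prepend (t i @ d) = prepend (t' j @ d')" ..
  then show ?thesis
    by (simp add: prepend_eq_iff)
qed

lemma is_pi_act_unique:
  assumes "is_pi_act \<Gamma> \<omega> v a b" and "is_pi_act \<Gamma> \<omega> v a b'"
  shows "b = b'"
proof -
  obtain n t s where b: "b \<in> Kom \<Gamma> \<omega>" and rep: "prefix_replacement v n t s"
    and eq: "\<And>i u. i < n \<Longrightarrow> b (s i @ u) = a (t i @ u)"
    using assms(1) unfolding is_pi_act_def by blast
  obtain n' t' s' where b': "b' \<in> Kom \<Gamma> \<omega>" and rep': "prefix_replacement v n' t' s'"
    and eq': "\<And>i u. i < n' \<Longrightarrow> b' (s' i @ u) = a (t' i @ u)"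
    using assms(2) unfolding is_pi_act_def by blast
  show ?thesis
  proof (rule Kom_eqI[OF b b'])
    fix w :: word01
    assume "(\<Sum>k<n. length (s k)) + (\<Sum>k<n'. length (s' k)) \<le> length w"
    then have "(\<Sum>k<n. length (s k)) \<le> length w" "(\<Sum>k<n'. length (s' k)) \<le> length w"
      by simp_all
    then obtain i d j d' where "i < n" "w = s i @ d" "j < n'" "w = s' j @ d'"
      using complete_prefix_code_long_word rep rep' unfolding prefix_replacement_def by meson
    moreover from this have "t i @ d = t' j @ d'"
      using prefix_replacement_relabel_unique[OF rep rep'] by simp
    ultimately show "b w = b' w"
      using eq eq' by metis
  qed
qed

lemma is_pi_act_exists:
  assumes closed: "\<omega> \<in> carrier \<Gamma> \<times> carrier \<Gamma> \<rightarrow> carrier \<Gamma>"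
    and rep: "prefix_replacement v n t s" and a: "a \<in> Kom \<Gamma> \<omega>"
  shows "\<exists>b. is_pi_act \<Gamma> \<omega> v a b"
proof -
  have s: "complete_prefix_code n s"
    using rep unfolding prefix_replacement_def by blast
  define N where "N = (\<Sum>k<n. length (s k))"
  \<comment> \<open>\<open>relabel\<close> is junk on short words, but \<open>a (relabel w)\<close> still lies in \<open>carrier \<Gamma>\<close>.\<close>
  define relabel where "relabel w = (THE u. \<exists>i<n. \<exists>d. w = s i @ d \<and> u = t i @ d)" for w
  have relabel: "relabel (s i @ d) = t i @ d" if "i < n" for i d
    unfolding relabel_def
    by (rule the_equality) (use that complete_prefix_code_append_unique[OF s] in blast)+
  have "a (relabel w) = \<omega> (a (relabel (w @ [False])), a (relabel (w @ [True])))"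
    if long: "N \<le> length w" for w
  proof -
    obtain i d where "i < n" "w = s i @ d"
      using complete_prefix_code_long_word[OF s] long N_def by blast
    moreover have "relabel (w @ [x]) = t i @ d @ [x]" for x
      using relabel[of i "d @ [x]"] \<open>i < n\<close> \<open>w = s i @ d\<close> by simp
    ultimately show ?thesis
      using relabel[of i d] Kom_rec[OF a, of "t i @ d"] by simp
  qed
  then obtain b where b: "b \<in> Kom \<Gamma> \<omega>" and long: "\<And>w. N \<le> length w \<Longrightarrow> b w = a (relabel w)"
    using Kom_extend[OF closed Kom_carrier[OF a]] by blast
  have "(\<lambda>u. b (s i @ u)) = (\<lambda>u. a (t i @ u))" if "i < n" for i
  proof (rule Kom_eqI[OF Kom_shift[OF b] Kom_shift[OF a]])
    show "b (s i @ u) = a (t i @ u)" if "N \<le> length u" for u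
      using that long relabel \<open>i < n\<close> by simp
  qed
  then have "is_pi_act \<Gamma> \<omega> v a b"
    unfolding is_pi_act_def using b rep by (blast dest: fun_cong)
  then show ?thesis
    by blast
qed

lemma pi_act_eqI: "is_pi_act \<Gamma> \<omega> v a b \<Longrightarrow> pi_act \<Gamma> \<omega> v a = b"
  unfolding pi_act_eq_The using is_pi_act_unique by blast

lemma is_pi_act_pi_act:
  assumes "\<omega> \<in> carrier \<Gamma> \<times> carrier \<Gamma> \<rightarrow> carrier \<Gamma>"
    and "v \<in> thompsonV" and "a \<in> Kom \<Gamma> \<omega>"
  shows "is_pi_act \<Gamma> \<omega> v a (pi_act \<Gamma> \<omega> v a)"
proof -
  obtain n t s where "prefix_replacement v n t s"
    using assms(2) thompsonV_iff_prefix_replacement by blast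
  then obtain b where b: "is_pi_act \<Gamma> \<omega> v a b"
    using is_pi_act_exists assms(1,3) by blast
  then have "pi_act \<Gamma> \<omega> v a = b"
    by (rule pi_act_eqI)
  with b show ?thesis
    by simp
qed

section \<open>Reversing the bits\<close>

definition bit_flip :: "cantor \<Rightarrow> cantor" where
  "bit_flip x = Not \<circ> x"

lemma bit_flip_bit_flip [simp]: "bit_flip (bit_flip x) = x"
  by (simp add: bit_flip_def fun_eq_iff)

lemma prepend_map_Not: "prepend (map Not u) x = bit_flip (prepend u (bit_flip x))"
  by (auto simp: prepend_def bit_flip_def)

lemma is_prefix_of_map_Not: "is_prefix_of (map Not p) x \<longleftrightarrow> is_prefix_of p (bit_flip x)"
  by (auto simp: is_prefix_of_def bit_flip_def)

lemma complete_prefix_code_map_Not: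
  assumes "complete_prefix_code n t"
  shows "complete_prefix_code n (map Not \<circ> t)"
proof -
  have "inj (map Not)"
    by (rule inj_mapI) (simp add: inj_def)
  then have "inj_on (map Not \<circ> t) {..<n}"
    using assms unfolding complete_prefix_code_def
    by (metis comp_inj_on inj_on_subset subset_UNIV)
  then show ?thesis
    using assms by (simp add: complete_prefix_code_def is_prefix_of_map_Not)
qed

lemma prefix_replacement_bit_flip:
  assumes "prefix_replacement v n t s"
  shows "prefix_replacement (bit_flip \<circ> v \<circ> bit_flip) n (map Not \<circ> t) (map Not \<circ> s)"
proof -
  have "bit_flip (v (bit_flip (prepend (map Not (t i)) w))) = prepend (map Not (s i)) w"
    if "i < n" for i w
    using assms that by (simp add: prefix_replacement_def prepend_map_Not)
  then show ?thesis
    using assms by (simp add: prefix_replacement_def complete_prefix_code_map_Not)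
qed

lemma thompsonV_bit_flip_conj: "v \<in> thompsonV \<Longrightarrow> bit_flip \<circ> v \<circ> bit_flip \<in> thompsonV"
  using prefix_replacement_bit_flip thompsonV_iff_prefix_replacement by blast

lemma Kom_swap_map_Not:
  assumes "a \<in> Kom \<Gamma> (\<lambda>(g, h). \<omega> (h, g))"
  shows "a \<circ> map Not \<in> Kom \<Gamma> \<omega>"
proof -
  have "(a \<circ> map Not) u = \<omega> ((a \<circ> map Not) (u @ [False]), (a \<circ> map Not) (u @ [True]))" for u
    using Kom_rec[OF assms, of "map Not u"] by simp
  moreover have "(a \<circ> map Not) u \<in> carrier \<Gamma>" for u
    using Kom_carrier[OF assms] by simp
  ultimately show ?thesis
    unfolding Kom_def by blast
qed

lemma is_pi_act_swap:
  assumes "is_pi_act \<Gamma> (\<lambda>(g, h). \<omega> (h, g)) v a b"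
  shows "is_pi_act \<Gamma> \<omega> (bit_flip \<circ> v \<circ> bit_flip) (a \<circ> map Not) (b \<circ> map Not)"
proof -
  obtain n t s where b: "b \<in> Kom \<Gamma> (\<lambda>(g, h). \<omega> (h, g))" and rep: "prefix_replacement v n t s"
    and eq: "\<forall>i<n. \<forall>u. b (s i @ u) = a (t i @ u)"
    using assms unfolding is_pi_act_def by blast
  have "\<forall>i<n. \<forall>u. (b \<circ> map Not) ((map Not \<circ> s) i @ u) = (a \<circ> map Not) ((map Not \<circ> t) i @ u)"
    using eq by (simp add: comp_def)
  then show ?thesis
    unfolding is_pi_act_def using Kom_swap_map_Not[OF b] prefix_replacement_bit_flip[OF rep] by blast
qed

lemma pi_act_swap:
  assumes closed: "\<omega> \<in> carrier \<Gamma> \<times> carrier \<Gamma> \<rightarrow> carrier \<Gamma>"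
    and "v \<in> thompsonV" and "a \<in> Kom \<Gamma> (\<lambda>(g, h). \<omega> (h, g))"
  shows "pi_act \<Gamma> \<omega> (bit_flip \<circ> v \<circ> bit_flip) (a \<circ> map Not)
    = pi_act \<Gamma> (\<lambda>(g, h). \<omega> (h, g)) v a \<circ> map Not"
proof -
  have "(\<lambda>(g, h). \<omega> (h, g)) \<in> carrier \<Gamma> \<times> carrier \<Gamma> \<rightarrow> carrier \<Gamma>"
    using closed by auto
  then show ?thesis
    using assms(2,3) by (intro pi_act_eqI is_pi_act_swap is_pi_act_pi_act)
qed

definition reflect :: "(word01 \<Rightarrow> 'g) \<times> (cantor \<Rightarrow> cantor) \<Rightarrow> (word01 \<Rightarrow> 'g) \<times> (cantor \<Rightarrow> cantor)"
  where "reflect = (\<lambda>(a, v). (a \<circ> map Not, bit_flip \<circ> v \<circ> bit_flip))"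

lemma reflect_reflect [simp]: "reflect (reflect x) = x"
  by (cases x) (simp add: reflect_def comp_def)

lemma reflect_carrier:
  "x \<in> carrier (Gom \<Gamma> (\<lambda>(g, h). \<omega> (h, g))) \<Longrightarrow> reflect x \<in> carrier (Gom \<Gamma> \<omega>)"
  unfolding Gom_def reflect_def by (auto intro: Kom_swap_map_Not thompsonV_bit_flip_conj)

lemma reflect_mult:
  assumes closed: "\<omega> \<in> carrier \<Gamma> \<times> carrier \<Gamma> \<rightarrow> carrier \<Gamma>"
    and x: "x \<in> carrier (Gom \<Gamma> (\<lambda>(g, h). \<omega> (h, g)))"
    and y: "y \<in> carrier (Gom \<Gamma> (\<lambda>(g, h). \<omega> (h, g)))"
  shows "reflect (x \<otimes>\<^bsub>Gom \<Gamma> (\<lambda>(g, h). \<omega> (h, g))\<^esub> y) = reflect x \<otimes>\<^bsub>Gom \<Gamma> \<omega>\<^esub> reflect y"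
proof -
  obtain a v b w where xy: "x = (a, v)" "y = (b, w)"
    by fastforce
  have "v \<in> thompsonV" "b \<in> Kom \<Gamma> (\<lambda>(g, h). \<omega> (h, g))"
    using x y xy unfolding Gom_def by auto
  then have "pi_act \<Gamma> \<omega> (bit_flip \<circ> v \<circ> bit_flip) (b \<circ> map Not)
      = pi_act \<Gamma> (\<lambda>(g, h). \<omega> (h, g)) v b \<circ> map Not"
    by (rule pi_act_swap[OF closed])
  then show ?thesis
    unfolding xy Gom_def reflect_def by (simp add: fun_eq_iff)
qed

lemma reflect_iso:
  assumes "\<omega> \<in> carrier \<Gamma> \<times> carrier \<Gamma> \<rightarrow> carrier \<Gamma>"
  shows "reflect \<in> iso (Gom \<Gamma> (\<lambda>(g, h). \<omega> (h, g))) (Gom \<Gamma> \<omega>)"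
proof -
  have "(\<lambda>(g, h). (\<lambda>(g, h). \<omega> (h, g)) (h, g)) = \<omega>"
    by (simp add: fun_eq_iff)
  then have reflect_back: "reflect y \<in> carrier (Gom \<Gamma> (\<lambda>(g, h). \<omega> (h, g)))"
    if "y \<in> carrier (Gom \<Gamma> \<omega>)" for y
    using reflect_carrier[of y \<Gamma> "\<lambda>(g, h). \<omega> (h, g)"] that by simp
  have "bij_betw reflect (carrier (Gom \<Gamma> (\<lambda>(g, h). \<omega> (h, g)))) (carrier (Gom \<Gamma> \<omega>))"
    by (rule bij_betw_byWitness[where f' = reflect]) (auto intro: reflect_carrier reflect_back)
  then show ?thesis
    using reflect_carrier reflect_mult[OF assms] unfolding iso_def hom_def by auto
qed

theorem mainTheorem17:
  fixes \<Gamma> :: "('g, 'm) monoid_scheme" and \<omega> :: "'g \<times> 'g \<Rightarrow> 'g"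
  assumes "group \<Gamma>"
    and "\<omega> \<in> hom (\<Gamma> \<times>\<times> \<Gamma>) \<Gamma>"
  shows "Gom \<Gamma> (\<lambda>(g, h). \<omega> (h, g)) \<cong> Gom \<Gamma> \<omega>"
proof (rule is_isoI)
  have "\<omega> \<in> carrier \<Gamma> \<times> carrier \<Gamma> \<rightarrow> carrier \<Gamma>"
    using assms(2) by (simp add: hom_def)
  then show "reflect \<in> iso (Gom \<Gamma> (\<lambda>(g, h). \<omega> (h, g))) (Gom \<Gamma> \<omega>)"
    by (rule reflect_iso)
qed

end
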